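(* Let $\mathcal{L}$ be an intuitionistic abstract logic and $a,b\in Expr_{\mathcal{L}}$. For every theory $T\in Th_{\mathcal{L}}$: (a) $a,b\in T$ iff $a\wedge b\in T$; (b) if $a\in T$ or $b\in T$ then $a\vee b\in T$, and the converse holds when $T$ is prime; (c) if $a\in T$ and $a\to b\in T$ then $b\in T$; (d) if $P\in PTh_{\mathcal{L}}$ is a prime theory, then $a\to b\in P$ iff for every prime theory $Q\supseteq P$, $a\in Q$ implies $b\in Q$.
   Context: An abstract logic is a triple $\mathcal{L}=(Expr_{\mathcal{L}},Th_{\mathcal{L}},\mathcal{C}_{\mathcal{L}})$ where $Expr_{\mathcal{L}}$ is a set, $Th_{\mathcal{L}}$ a non-empty set of subsets of $Expr_{\mathcal{L}}$ (theories) with $\bigcap\mathcal{T}\in Th_{\mathcal{L}}$ for every non-empty $\mathcal{T}\subseteq Th_{\mathcal{L}}$, and $\mathcal{C}_{\mathcal{L}}$ a set of operations on $Expr_{\mathcal{L}}$. $\mathcal{L}$ is closed under union of chains if the union of every non-empty chain of theories is a theory. A theory $T$ is prime if $T=\bigcap\mathcal{T}$ for a non-empty finite $\mathcal{T}\subseteq Th_{\mathcal{L}}$ implies $T\in\mathcal{T}$; totally prime if this holds for every non-empty $\mathcal{T}$ of any cardinality. $PTh_{\mathcal{L}}$, $TPTh_{\mathcal{L}}$ denote the sets of prime and totally prime theories. An intuitionistic abstract logic is an abstract logic closed under union of chains with binary connectives $\vee,\wedge,\to$ and constants $\top,\bot$ such that for all $a,b\in Expr_{\mathcal{L}}$ and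 all $T\in TPTh_{\mathcal{L}}$: $a\vee b\in T$ iff $a\in T$ or $b\in T$; $a\wedge b\in T$ iff $a\in T$ and $b\in T$; $a\to b\in T$ iff for every totally prime $T'\supseteq T$, $a\in T'$ implies $b\in T'$; $\top$ lies in every theory and $\bot$ in no theory. *)

theory Defs
  imports Main
begin

text \<open>An abstract logic given by its set of expressions E and its set of theories Th.
  The set of operations C is represented only through the connectives that are used.\<close>

definition abstract_logic :: "'a set \<Rightarrow> 'a set set \<Rightarrow> bool" where
  "abstract_logic E Th \<longleftrightarrow>
     Th \<noteq> {} \<and> (\<forall>T\<in>Th. T \<subseteq> E) \<and>
     (\<forall>\<T>. \<T> \<subseteq> Th \<and> \<T> \<noteq> {} \<longrightarrow> \<Inter>\<T> \<in> Th)"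

definition closed_under_union_of_chains :: "'a set set \<Rightarrow> bool" where
  "closed_under_union_of_chains Th \<longleftrightarrow>
     (\<forall>\<C>. \<C> \<subseteq> Th \<and> \<C> \<noteq> {} \<and> (\<forall>X\<in>\<C>. \<forall>Y\<in>\<C>. X \<subseteq> Y \<or> Y \<subseteq> X)
        \<longrightarrow> \<Union>\<C> \<in> Th)"

definition PTh :: "'a set set \<Rightarrow> 'a set set" where
  "PTh Th = {T \<in> Th. \<forall>\<T>. \<T> \<subseteq> Th \<and> \<T> \<noteq> {} \<and> finite \<T> \<and> T = \<Inter>\<T> \<longrightarrow> T \<in> \<T>}"

definition TPTh :: "'a set set \<Rightarrow> 'a set set" where
  "TPTh Th = {T \<in> Th. \<forall>\<T>. \<T> \<subseteq> Th \<and> \<T> \<noteq> {} \<and> T = \<Inter>\<T> \<longrightarrow> T \<in> \<T>}"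

definition intuitionistic_abstract_logic ::
  "'a set \<Rightarrow> 'a set set \<Rightarrow> ('a \<Rightarrow> 'a \<Rightarrow> 'a) \<Rightarrow> ('a \<Rightarrow> 'a \<Rightarrow> 'a) \<Rightarrow> ('a \<Rightarrow> 'a \<Rightarrow> 'a)
     \<Rightarrow> 'a \<Rightarrow> 'a \<Rightarrow> bool" where
  "intuitionistic_abstract_logic E Th dsj cnj imp tp bt \<longleftrightarrow>
     abstract_logic E Th \<and> closed_under_union_of_chains Th \<and>
     (\<forall>a\<in>E. \<forall>b\<in>E. dsj a b \<in> E \<and> cnj a b \<in> E \<and> imp a b \<in> E) \<and>
     tp \<in> E \<and> bt \<in> E \<and>
     (\<forall>a\<in>E. \<forall>b\<in>E. \<forall>T\<in>TPTh Th.
        (dsj a b \<in> T \<longleftrightarrow> a \<in> T \<or> b \<in> T) \<and>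
        (cnj a b \<in> T \<longleftrightarrow> a \<in> T \<and> b \<in> T) \<and>
        (imp a b \<in> T \<longleftrightarrow> (\<forall>T'\<in>TPTh Th. T \<subseteq> T' \<longrightarrow> a \<in> T' \<longrightarrow> b \<in> T'))) \<and>
     (\<forall>T\<in>Th. tp \<in> T \<and> bt \<notin> T)"

end

theory Submission
  imports Defs
begin

text \<open>By Zorn's lemma every theory is the intersection of the totally prime theories
  containing it, so the clauses for the connectives, which are only postulated for totally
  prime theories, transfer to arbitrary theories. For a prime theory T containing a \<or> b but
  neither a nor b, T is the intersection of the two theories cut out by the totally prime
  extensions containing a, respectively b, contradicting primality. The clause for \<rightarrow> on
  prime theories follows because totally prime theories are prime.\<close>

lemma TPTh_subset_PTh: "TPTh Th \<subseteq> PTh Th"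
  unfolding TPTh_def PTh_def by blast

lemma PTh_subset_Th: "PTh Th \<subseteq> Th"
  unfolding PTh_def by blast

lemma PTh_Int_cases:
  assumes "T \<in> PTh Th" and "A \<in> Th" and "B \<in> Th" and "T = A \<inter> B"
  shows "T = A \<or> T = B"
proof -
  have "\<forall>\<T>. \<T> \<subseteq> Th \<and> \<T> \<noteq> {} \<and> finite \<T> \<and> T = \<Inter>\<T> \<longrightarrow> T \<in> \<T>"
    using assms(1) unfolding PTh_def by blast
  then have "{A, B} \<subseteq> Th \<and> {A, B} \<noteq> {} \<and> finite {A, B} \<and> T = \<Inter>{A, B} \<longrightarrow> T \<in> {A, B}"
    by (rule spec)
  then show ?thesis using assms(2-4) by simp
qed

lemma closed_under_union_of_chainsD:
  assumes "closed_under_union_of_chains Th" and "C \<subseteq> Th" and "C \<noteq> {}" and "chain\<^sub>\<subseteq> C"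
  shows "\<Union>C \<in> Th"
  using assms unfolding closed_under_union_of_chains_def chain_subset_def by blast

lemma TPTh_if_maximal_avoiding:
  assumes "M \<in> Th" and "x \<notin> M"
    and maximal: "\<And>S. S \<in> Th \<Longrightarrow> M \<subseteq> S \<Longrightarrow> x \<notin> S \<Longrightarrow> S = M"
  shows "M \<in> TPTh Th"
  unfolding TPTh_def
proof (intro CollectI conjI allI impI)
  fix \<T> assume "\<T> \<subseteq> Th \<and> \<T> \<noteq> {} \<and> M = \<Inter>\<T>"
  then have \<T>: "\<T> \<subseteq> Th" and M: "M = \<Inter>\<T>" by auto
  have "\<exists>S\<in>\<T>. x \<notin> S"
    using \<open>x \<notin> M\<close> M by blast
  then obtain S where "S \<in> \<T>" "x \<notin> S" by blast
  moreover have "S = M"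
    using maximal \<T> M \<open>S \<in> \<T>\<close> \<open>x \<notin> S\<close> by blast
  ultimately show "M \<in> \<T>" by simp
qed (use assms in simp)

lemma totally_prime_extension_avoiding:
  assumes closed: "closed_under_union_of_chains Th" and "T \<in> Th" and "x \<notin> T"
  obtains M where "M \<in> TPTh Th" and "T \<subseteq> M" and "x \<notin> M"
proof -
  let ?A = "{S \<in> Th. T \<subseteq> S \<and> x \<notin> S}"
  have "\<forall>C\<in>chains ?A. \<exists>U\<in>?A. \<forall>X\<in>C. X \<subseteq> U"
  proof
    fix C assume C: "C \<in> chains ?A"
    show "\<exists>U\<in>?A. \<forall>X\<in>C. X \<subseteq> U"
    proof (cases "C = {}")
      case True
      then show ?thesis using assms(2,3) by blast
    next
      case False
      have sub: "C \<subseteq> ?A" and "chain\<^sub>\<subseteq> C"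
        using C by (simp_all add: chains_def)
      then have "\<Union>C \<in> Th"
        using closed_under_union_of_chainsD[OF closed _ False] by blast
      moreover have "T \<subseteq> \<Union>C" "x \<notin> \<Union>C"
        using sub False by blast+
      ultimately show ?thesis by blast
    qed
  qed
  then obtain M where M: "M \<in> ?A" and maximal: "\<forall>S\<in>?A. M \<subseteq> S \<longrightarrow> S = M"
    by (rule Zorn_Lemma2[THEN bexE]) blast
  have "M \<in> TPTh Th"
  proof (rule TPTh_if_maximal_avoiding)
    show "M \<in> Th" "x \<notin> M" using M by auto
    show "S = M" if "S \<in> Th" "M \<subseteq> S" "x \<notin> S" for S
      using maximal M that by blast
  qed
  then show thesis using M by (intro that) auto
qed

lemma mem_theory_iff_mem_TPTh_extensions:
  assumes "closed_under_union_of_chains Th" and "T \<in> Th"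
  shows "x \<in> T \<longleftrightarrow> (\<forall>M\<in>TPTh Th. T \<subseteq> M \<longrightarrow> x \<in> M)"
  using totally_prime_extension_avoiding[OF assms, of x] by blast

lemma PTh_mem_either_if_TPTh_extensions:
  assumes logic: "abstract_logic E Th" and closed: "closed_under_union_of_chains Th"
    and T: "T \<in> PTh Th"
    and either: "\<And>M. M \<in> TPTh Th \<Longrightarrow> T \<subseteq> M \<Longrightarrow> a \<in> M \<or> b \<in> M"
  shows "a \<in> T \<or> b \<in> T"
proof (rule ccontr)
  assume "\<not> (a \<in> T \<or> b \<in> T)"
  then have "a \<notin> T" "b \<notin> T" by auto
  have T_Th: "T \<in> Th" using T PTh_subset_Th by blast
  note mem = mem_theory_iff_mem_TPTh_extensions[OF closed T_Th]
  define containing where "containing y = {M \<in> TPTh Th. T \<subseteq> M \<and> y \<in> M}" for y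
  obtain Ma where "Ma \<in> TPTh Th" "T \<subseteq> Ma" "a \<notin> Ma"
    using totally_prime_extension_avoiding[OF closed T_Th \<open>a \<notin> T\<close>] .
  then have "Ma \<in> containing b"
    using either unfolding containing_def by blast
  obtain Mb where "Mb \<in> TPTh Th" "T \<subseteq> Mb" "b \<notin> Mb"
    using totally_prime_extension_avoiding[OF closed T_Th \<open>b \<notin> T\<close>] .
  then have "Mb \<in> containing a"
    using either unfolding containing_def by blast
  have "containing a \<noteq> {}" and "containing b \<noteq> {}"
    using \<open>Ma \<in> containing b\<close> \<open>Mb \<in> containing a\<close> by blast+
  moreover have "\<Inter>(containing y) \<in> Th" if "containing y \<noteq> {}" for y
  proof -
    have "containing y \<subseteq> Th"
      using TPTh_subset_PTh PTh_subset_Th unfolding containing_def by blast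
    with that logic show ?thesis unfolding abstract_logic_def by blast
  qed
  ultimately have "\<Inter>(containing a) \<in> Th" "\<Inter>(containing b) \<in> Th" by auto
  moreover have "T = \<Inter>(containing a) \<inter> \<Inter>(containing b)"
  proof
    show "T \<subseteq> \<Inter>(containing a) \<inter> \<Inter>(containing b)" unfolding containing_def by blast
    show "\<Inter>(containing a) \<inter> \<Inter>(containing b) \<subseteq> T"
    proof
      fix y assume y: "y \<in> \<Inter>(containing a) \<inter> \<Inter>(containing b)"
      have "y \<in> M" if "M \<in> TPTh Th" "T \<subseteq> M" for M
        using either[OF that] that y unfolding containing_def by blast
      then show "y \<in> T" using mem by blast
    qed
  qed
  ultimately have "T = \<Inter>(containing a) \<or> T = \<Inter>(containing b)"
    using PTh_Int_cases[OF T] by blast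
  moreover have "a \<in> \<Inter>(containing a)" "b \<in> \<Inter>(containing b)"
    unfolding containing_def by blast+
  ultimately show False using \<open>a \<notin> T\<close> \<open>b \<notin> T\<close> by blast
qed

locale intuitionistic_logic =
  fixes E Th dsj cnj imp tp bt
  assumes intuitionistic: "intuitionistic_abstract_logic E Th dsj cnj imp tp bt"
begin

lemma abstract_logic: "abstract_logic E Th"
  and closed: "closed_under_union_of_chains Th"
  using intuitionistic unfolding intuitionistic_abstract_logic_def by blast+

context
  fixes a b assumes a: "a \<in> E" and b: "b \<in> E"
begin

lemma TPTh_dsj: "M \<in> TPTh Th \<Longrightarrow> dsj a b \<in> M \<longleftrightarrow> a \<in> M \<or> b \<in> M"
  and TPTh_cnj: "M \<in> TPTh Th \<Longrightarrow> cnj a b \<in> M \<longleftrightarrow> a \<in> M \<and> b \<in> M"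
  and TPTh_imp: "M \<in> TPTh Th \<Longrightarrow>
      imp a b \<in> M \<longleftrightarrow> (\<forall>M'\<in>TPTh Th. M \<subseteq> M' \<longrightarrow> a \<in> M' \<longrightarrow> b \<in> M')"
  using intuitionistic a b unfolding intuitionistic_abstract_logic_def by blast+

context
  fixes T assumes T: "T \<in> Th"
begin

lemmas mem_T = mem_theory_iff_mem_TPTh_extensions[OF closed T]

lemma cnj_mem_iff: "cnj a b \<in> T \<longleftrightarrow> a \<in> T \<and> b \<in> T"
  using mem_T[of a] mem_T[of b] mem_T[of "cnj a b"] TPTh_cnj by blast

lemma dsj_memI: "a \<in> T \<or> b \<in> T \<Longrightarrow> dsj a b \<in> T"
  using mem_T[of a] mem_T[of b] mem_T[of "dsj a b"] TPTh_dsj by blast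

lemma imp_mp: "a \<in> T \<Longrightarrow> imp a b \<in> T \<Longrightarrow> b \<in> T"
  using mem_T[of a] mem_T[of b] mem_T[of "imp a b"] TPTh_imp by blast

end

lemma PTh_dsj_memD:
  assumes "T \<in> PTh Th" and "dsj a b \<in> T"
  shows "a \<in> T \<or> b \<in> T"
proof (rule PTh_mem_either_if_TPTh_extensions[OF abstract_logic closed \<open>T \<in> PTh Th\<close>])
  fix M assume "M \<in> TPTh Th" "T \<subseteq> M"
  then show "a \<in> M \<or> b \<in> M"
    using \<open>dsj a b \<in> T\<close> TPTh_dsj by blast
qed

lemma PTh_imp_mem_iff:
  assumes P: "P \<in> PTh Th"
  shows "imp a b \<in> P \<longleftrightarrow> (\<forall>Q\<in>PTh Th. P \<subseteq> Q \<longrightarrow> a \<in> Q \<longrightarrow> b \<in> Q)"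
proof
  assume "imp a b \<in> P"
  then show "\<forall>Q\<in>PTh Th. P \<subseteq> Q \<longrightarrow> a \<in> Q \<longrightarrow> b \<in> Q"
    using imp_mp PTh_subset_Th by blast
next
  assume prime_ext: "\<forall>Q\<in>PTh Th. P \<subseteq> Q \<longrightarrow> a \<in> Q \<longrightarrow> b \<in> Q"
  show "imp a b \<in> P"
  proof (rule ccontr)
    assume "imp a b \<notin> P"
    then obtain M where "M \<in> TPTh Th" "P \<subseteq> M" "imp a b \<notin> M"
      using totally_prime_extension_avoiding[OF closed] P PTh_subset_Th by blast
    then obtain M' where "M' \<in> TPTh Th" "P \<subseteq> M'" "a \<in> M'" "b \<notin> M'"
      using TPTh_imp by blast
    then show False
      using prime_ext TPTh_subset_PTh by blast
  qed
qed

end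

end

theorem lemma2p7:
  assumes "intuitionistic_abstract_logic E Th dsj cnj imp tp bt"
    and "a \<in> E" and "b \<in> E"
  shows "(\<forall>T\<in>Th.
      ((a \<in> T \<and> b \<in> T) \<longleftrightarrow> cnj a b \<in> T) \<and>
      ((a \<in> T \<or> b \<in> T) \<longrightarrow> dsj a b \<in> T) \<and>
      (T \<in> PTh Th \<longrightarrow> dsj a b \<in> T \<longrightarrow> a \<in> T \<or> b \<in> T) \<and>
      ((a \<in> T \<and> imp a b \<in> T) \<longrightarrow> b \<in> T)) \<and>
    (\<forall>P\<in>PTh Th. imp a b \<in> P \<longleftrightarrow> (\<forall>Q\<in>PTh Th. P \<subseteq> Q \<longrightarrow> a \<in> Q \<longrightarrow> b \<in> Q))"
proof -
  interpret intuitionistic_logic E Th dsj cnj imp tp bt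
    using assms(1) by unfold_locales
  note ab = assms(2,3)
  show ?thesis
    using cnj_mem_iff[OF ab] dsj_memI[OF ab] PTh_dsj_memD[OF ab] imp_mp[OF ab]
      PTh_imp_mem_iff[OF ab]
    by blast
qed

end
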